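(* Let $F_{ij}$ ($0\le i\le m$, $0\le j\le n$) be a dual-convex $m\times n$ net in $I^3$ and let $V_{ij}\in\mathbb R^3$ be vectors such that for each $0\le k<m$, $0\le l<n$ there is an infinitesimal isotropic congruence $V$ (depending on $k,l$) with $V_{ij}=V(F_{ij})$ for all $i\in\{k,k+1\}$, $j\in\{l,l+1\}$. Then $F_{ij}+tV_{ij}$ is a dual-convex $m\times n$ net for all $t$ sufficiently small in absolute value.
   Context: $I^3$ is $\mathbb{R}^3$ with coordinates $(x,y,z)$; a line or plane is isotropic if parallel to the $z$-axis. An infinitesimal isotropic congruence is a vector field $V(\mathbf x)=a\mathbf x+\mathbf b$ with $\mathbf b\in\mathbb R^3$ and $a=\begin{pmatrix}0&-\phi&0\\ \phi&0&0\\ c_1&c_2&0\end{pmatrix}$, $\phi,c_1,c_2\in\mathbb R$. An $m\times n$ net: points $F_{ij}$, $0\le i\le m,0\le j\le n$, with $F_{ij},F_{i+1,j},F_{i+1,j+1},F_{i,j+1}$ consecutive vertices of a convex planar quadrilateral (face $p_{ij}$) for all $0\le i<m,0\le j<n$. Boundary vertices: $i\in\{0,m\}$ or $j\in\{0,n\}$; consecutive faces around non-boundary $F_{ij}$: $p_{i-1,j-1},p_{i,j-1},p_{ij},p_{i-1,j}$. Convex 4-hedral angle with vertex $O$: union of rays from $O$ meeting a convex quadrilateral in a plane not through $O$; flat angles: rays through one side; admissible: isotropic line through $O$ meets its interior. Dual-convex: $m,n\ge2$ and at each non-boundary vertex the four consecutive face planes are the planes of four consecutive flat angles of an admissible convex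 4-hedral angle. *)

theory Defs
  imports "HOL-Analysis.Analysis"
begin

type_synonym pt = "real^3"

text \<open>Isotropic direction: the z-axis.\<close>
definition e3 :: pt where "e3 = vector [0, 0, 1]"

definition iso_matrix :: "real \<Rightarrow> real \<Rightarrow> real \<Rightarrow> real^3^3" where
  "iso_matrix \<phi> c1 c2 =
     vector [vector [0, -\<phi>, 0], vector [\<phi>, 0, 0], vector [c1, c2, 0]]"

definition inf_iso_congruence :: "(pt \<Rightarrow> pt) \<Rightarrow> bool" where
  "inf_iso_congruence V \<longleftrightarrow>
     (\<exists>\<phi> c1 c2 (b::pt). \<forall>x. V x = iso_matrix \<phi> c1 c2 *v x + b)"

text \<open>A, B, C, D are consecutive vertices of a (non-degenerate) convex planar
  quadrilateral: the open diagonals meet and the points are not collinear.\<close>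
definition convex_quad :: "pt \<Rightarrow> pt \<Rightarrow> pt \<Rightarrow> pt \<Rightarrow> bool" where
  "convex_quad A B C D \<longleftrightarrow>
     (open_segment A C \<inter> open_segment B D \<noteq> {}) \<and> \<not> collinear {A, B, C, D}"

definition is_net :: "nat \<Rightarrow> nat \<Rightarrow> (nat \<Rightarrow> nat \<Rightarrow> pt) \<Rightarrow> bool" where
  "is_net m n F \<longleftrightarrow>
     (\<forall>i<m. \<forall>j<n. convex_quad (F i j) (F (Suc i) j) (F (Suc i) (Suc j)) (F i (Suc j)))"

definition face_plane :: "(nat \<Rightarrow> nat \<Rightarrow> pt) \<Rightarrow> nat \<Rightarrow> nat \<Rightarrow> pt set" where
  "face_plane F i j = affine hull {F i j, F (Suc i) j, F (Suc i) (Suc j), F i (Suc j)}"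

definition hedral_angle :: "pt \<Rightarrow> pt \<Rightarrow> pt \<Rightarrow> pt \<Rightarrow> pt \<Rightarrow> pt set" where
  "hedral_angle X Q1 Q2 Q3 Q4 =
     {X + s *\<^sub>R (q - X) | s q. s \<ge> 0 \<and> q \<in> convex hull {Q1, Q2, Q3, Q4}}"

definition admissible_angle_planes :: "pt \<Rightarrow> pt set \<Rightarrow> pt set \<Rightarrow> pt set \<Rightarrow> pt set \<Rightarrow> bool" where
  "admissible_angle_planes X P1 P2 P3 P4 \<longleftrightarrow>
     (\<exists>Q1 Q2 Q3 Q4.
        convex_quad Q1 Q2 Q3 Q4 \<and> X \<notin> affine hull {Q1, Q2, Q3, Q4} \<and>
        P1 = affine hull {X, Q1, Q2} \<and> P2 = affine hull {X, Q2, Q3} \<and>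
        P3 = affine hull {X, Q3, Q4} \<and> P4 = affine hull {X, Q4, Q1} \<and>
        (\<exists>t. X + t *\<^sub>R e3 \<in> interior (hedral_angle X Q1 Q2 Q3 Q4)))"

definition dual_convex :: "nat \<Rightarrow> nat \<Rightarrow> (nat \<Rightarrow> nat \<Rightarrow> pt) \<Rightarrow> bool" where
  "dual_convex m n F \<longleftrightarrow>
     is_net m n F \<and> 2 \<le> m \<and> 2 \<le> n \<and>
     (\<forall>i j. 0 < i \<and> i < m \<and> 0 < j \<and> j < n \<longrightarrow>
        admissible_angle_planes (F i j)
          (face_plane F (i - 1) (j - 1)) (face_plane F i (j - 1))
          (face_plane F i j) (face_plane F (i - 1) j))"

end

theory Submission
  imports Defs
begin

text \<open>At an interior vertex X consecutive face planes meet in the edge lines of the net, so an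
  admissible angle at X is determined by edge vectors v1, ..., v4 pointing along the four edges:
  v1, v2, v3 are linearly independent, v4 = a v1 + b v2 + c v3 with a, c > 0 > b (convexity), and
  some multiple of the isotropic direction e3 is a positive combination of v1, ..., v4
  (admissibility). Conversely, such vectors together with planes through consecutive pairs of them
  give back an admissible angle, whose base can be taken to be a parallelogram. All coefficients
  involved are Cramer quotients of triple products, hence continuous, so these conditions are
  open. On each face the vertices move by x \<mapsto> x + t W x for an infinitesimal isotropic
  congruence W, which is an injective affine map, so the faces stay convex quadrilaterals for every
  t; the edge vectors then depend continuously on t, and admissibility at the finitely many
  interior vertices persists for small |t|.\<close>

section \<open>Triple products\<close>

definition triple :: "real^3 \<Rightarrow> real^3 \<Rightarrow> real^3 \<Rightarrow> real" where
  "triple a b c = det (vector [a, b, c] :: real^3^3)"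

lemma triple_expand:
  "triple a b c = a$1 * (b$2 * c$3 - b$3 * c$2) - a$2 * (b$1 * c$3 - b$3 * c$1)
     + a$3 * (b$1 * c$2 - b$2 * c$1)"
  unfolding triple_def det_3 by (simp add: vector_3 algebra_simps)

lemma triple_lincomb:
  "triple (x *\<^sub>R a + y *\<^sub>R b + z *\<^sub>R c) b c = x * triple a b c"
  "triple a (x *\<^sub>R a + y *\<^sub>R b + z *\<^sub>R c) c = y * triple a b c"
  "triple a b (x *\<^sub>R a + y *\<^sub>R b + z *\<^sub>R c) = z * triple a b c"
  by (simp_all add: triple_expand algebra_simps)

lemma triple_scaleR: "triple (x *\<^sub>R a) (y *\<^sub>R b) (z *\<^sub>R c) = x * y * z * triple a b c"
  by (simp add: triple_expand algebra_simps)

lemma triple_cramer: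
  assumes "triple a b c \<noteq> 0"
  shows "w = (triple w b c / triple a b c) *\<^sub>R a + (triple a w c / triple a b c) *\<^sub>R b
           + (triple a b w / triple a b c) *\<^sub>R c"
proof -
  have "triple a b c *\<^sub>R w = triple w b c *\<^sub>R a + triple a w c *\<^sub>R b + triple a b w *\<^sub>R c"
    unfolding triple_expand vec_eq_iff forall_3 by (simp add: algebra_simps)
  then have "w = (1 / triple a b c) *\<^sub>R (triple w b c *\<^sub>R a + triple a w c *\<^sub>R b + triple a b w *\<^sub>R c)"
    using assms by (metis divide_self_if nonzero_eq_divide_eq scaleR_one scaleR_scaleR)
  then show ?thesis
    by (simp add: scaleR_add_right)
qed

lemma triple_eq_0_iff_dependent:
  "triple a b c = 0 \<longleftrightarrow> (\<exists>x y z. (x \<noteq> 0 \<or> y \<noteq> 0 \<or> z \<noteq> 0) \<and> x *\<^sub>R a + y *\<^sub>R b + z *\<^sub>R c = 0)"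
proof
  assume "triple a b c = 0"
  let ?A = "transpose (vector [a, b, c] :: real^3^3)"
  have "\<not> inj ((*v) ?A)"
    using \<open>triple a b c = 0\<close> det_nz_iff_inj[of "(*v) ?A"]
    by (simp add: triple_def det_transpose matrix_vector_mul_linear)
  then obtain p q where "p \<noteq> q" "?A *v p = ?A *v q"
    unfolding inj_def by blast
  then have "p - q \<noteq> 0" "?A *v (p - q) = 0"
    by (simp_all add: matrix_vector_mult_diff_distrib)
  then have "(p - q)$1 \<noteq> 0 \<or> (p - q)$2 \<noteq> 0 \<or> (p - q)$3 \<noteq> 0"
    "(p - q)$1 *\<^sub>R a + (p - q)$2 *\<^sub>R b + (p - q)$3 *\<^sub>R c = 0"
    unfolding vec_eq_iff forall_3
    by (simp_all add: matrix_vector_mult_def transpose_def sum_3 algebra_simps)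
  then show "\<exists>x y z. (x \<noteq> 0 \<or> y \<noteq> 0 \<or> z \<noteq> 0) \<and> x *\<^sub>R a + y *\<^sub>R b + z *\<^sub>R c = 0"
    by blast
next
  assume "\<exists>x y z. (x \<noteq> 0 \<or> y \<noteq> 0 \<or> z \<noteq> 0) \<and> x *\<^sub>R a + y *\<^sub>R b + z *\<^sub>R c = 0"
  then obtain x y z where nontrivial: "x \<noteq> 0 \<or> y \<noteq> 0 \<or> z \<noteq> 0"
    and combination: "x *\<^sub>R a + y *\<^sub>R b + z *\<^sub>R c = 0"
    by blast
  have "triple 0 b c = 0" "triple a 0 c = 0" "triple a b 0 = 0"
    by (simp_all add: triple_expand)
  then have "x * triple a b c = 0" "y * triple a b c = 0" "z * triple a b c = 0"
    using triple_lincomb[where x = x and y = y and z = z and a = a and b = b and c = c]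
    unfolding combination by simp_all
  then show "triple a b c = 0"
    using nontrivial by auto
qed

lemma tendsto_triple [tendsto_intros]:
  "(f \<longlongrightarrow> a) F \<Longrightarrow> (g \<longlongrightarrow> b) F \<Longrightarrow> (h \<longlongrightarrow> c) F \<Longrightarrow>
    ((\<lambda>x. triple (f x) (g x) (h x)) \<longlongrightarrow> triple a b c) F"
  unfolding triple_expand by (intro tendsto_intros)

lemma eventually_triple_coordinates_in:
  assumes v1: "(v1 \<longlongrightarrow> u1) F" and v2: "(v2 \<longlongrightarrow> u2) F" and v3: "(v3 \<longlongrightarrow> u3) F"
    and w: "(w \<longlongrightarrow> a *\<^sub>R u1 + b *\<^sub>R u2 + c *\<^sub>R u3) F"
    and nonzero: "triple u1 u2 u3 \<noteq> 0"
    and "open A" "open B" "open C" "a \<in> A" "b \<in> B" "c \<in> C"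
  shows "\<forall>\<^sub>F t in F. \<exists>y1\<in>A. \<exists>y2\<in>B. \<exists>y3\<in>C. w t = y1 *\<^sub>R v1 t + y2 *\<^sub>R v2 t + y3 *\<^sub>R v3 t"
proof -
  define D where "D t = triple (v1 t) (v2 t) (v3 t)" for t
  have D: "(D \<longlongrightarrow> triple u1 u2 u3) F"
    unfolding D_def using v1 v2 v3 by (intro tendsto_intros)
  have "((\<lambda>t. triple (w t) (v2 t) (v3 t) / D t) \<longlongrightarrow> a) F"
    using tendsto_divide[OF tendsto_triple[OF w v2 v3] D] nonzero by (simp add: triple_lincomb)
  then have 1: "\<forall>\<^sub>F t in F. triple (w t) (v2 t) (v3 t) / D t \<in> A"
    using topological_tendstoD \<open>open A\<close> \<open>a \<in> A\<close> by blast
  have "((\<lambda>t. triple (v1 t) (w t) (v3 t) / D t) \<longlongrightarrow> b) F"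
    using tendsto_divide[OF tendsto_triple[OF v1 w v3] D] nonzero by (simp add: triple_lincomb)
  then have 2: "\<forall>\<^sub>F t in F. triple (v1 t) (w t) (v3 t) / D t \<in> B"
    using topological_tendstoD \<open>open B\<close> \<open>b \<in> B\<close> by blast
  have "((\<lambda>t. triple (v1 t) (v2 t) (w t) / D t) \<longlongrightarrow> c) F"
    using tendsto_divide[OF tendsto_triple[OF v1 v2 w] D] nonzero by (simp add: triple_lincomb)
  then have 3: "\<forall>\<^sub>F t in F. triple (v1 t) (v2 t) (w t) / D t \<in> C"
    using topological_tendstoD \<open>open C\<close> \<open>c \<in> C\<close> by blast
  have "\<forall>\<^sub>F t in F. D t \<noteq> 0"
    using tendsto_imp_eventually_ne[OF D nonzero] .
  with 1 2 3 show ?thesis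
    by eventually_elim (metis D_def triple_cramer)
qed

section \<open>Convex quadrilaterals\<close>

lemma convex_quad_rotate: "convex_quad A B C D \<Longrightarrow> convex_quad B C D A"
  unfolding convex_quad_def by (metis Int_commute insert_commute open_segment_commute)

lemma diagonals_meet_imp_fourth_vertex:
  fixes A B C D :: "'a::real_vector"
  assumes "open_segment A C \<inter> open_segment B D \<noteq> {}"
  shows "\<exists>a b c. 0 < a \<and> b < 0 \<and> 0 < c \<and> a + b + c = 1 \<and> D = a *\<^sub>R A + b *\<^sub>R B + c *\<^sub>R C"
proof -
  obtain M where "M \<in> open_segment A C" "M \<in> open_segment B D"
    using assms by blast
  then obtain \<alpha> \<beta> where \<alpha>: "0 < \<alpha>" "\<alpha> < 1" "M = (1 - \<alpha>) *\<^sub>R A + \<alpha> *\<^sub>R C"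
    and \<beta>: "0 < \<beta>" "\<beta> < 1" "M = (1 - \<beta>) *\<^sub>R B + \<beta> *\<^sub>R D"
    unfolding in_segment(2) by blast
  then have meet: "(1 - \<alpha>) *\<^sub>R A + \<alpha> *\<^sub>R C = (1 - \<beta>) *\<^sub>R B + \<beta> *\<^sub>R D"
    by simp
  have "\<beta> *\<^sub>R (((1 - \<alpha>) / \<beta>) *\<^sub>R A + (- (1 - \<beta>) / \<beta>) *\<^sub>R B + (\<alpha> / \<beta>) *\<^sub>R C)
      = (1 - \<alpha>) *\<^sub>R A + \<alpha> *\<^sub>R C - (1 - \<beta>) *\<^sub>R B"
    using \<beta> by (simp add: scaleR_add_right) (simp add: algebra_simps)
  also have "\<dots> = \<beta> *\<^sub>R D"
    using meet by (simp add: algebra_simps)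
  finally have "D = ((1 - \<alpha>) / \<beta>) *\<^sub>R A + (- (1 - \<beta>) / \<beta>) *\<^sub>R B + (\<alpha> / \<beta>) *\<^sub>R C"
    using \<beta> by simp
  then show ?thesis
    using \<alpha> \<beta>
    by (intro exI[of _ "(1 - \<alpha>) / \<beta>"] exI[of _ "- (1 - \<beta>) / \<beta>"] exI[of _ "\<alpha> / \<beta>"])
      (auto simp: field_simps)
qed

lemma fourth_vertex_imp_diagonals_meet:
  assumes "\<not> collinear {Q1, Q2, Q3}" "0 < a" "b < 0" "0 < c" "a + b + c = 1"
    and "Q4 = a *\<^sub>R Q1 + b *\<^sub>R Q2 + c *\<^sub>R Q3"
  shows "open_segment Q1 Q3 \<inter> open_segment Q2 Q4 \<noteq> {}"
proof -
  have "0 < 1 - b" "c < 1 - b"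
    using assms(2-5) by simp_all
  define \<beta> \<alpha> where "\<beta> = 1 / (1 - b)" and "\<alpha> = c / (1 - b)"
  have \<alpha>: "0 < \<alpha>" "\<alpha> < 1" and \<beta>: "0 < \<beta>" "\<beta> < 1"
    using \<open>0 < 1 - b\<close> \<open>c < 1 - b\<close> assms(3,4) by (simp_all add: \<alpha>_def \<beta>_def)
  have "\<beta> * (1 - b) = 1" "\<beta> * a = 1 - \<alpha>" "\<beta> * c = \<alpha>"
    using \<open>0 < 1 - b\<close> assms(5) by (simp_all add: \<alpha>_def \<beta>_def field_simps)
  moreover have "(1 - \<beta>) *\<^sub>R Q2 + \<beta> *\<^sub>R Q4
      = (\<beta> * a) *\<^sub>R Q1 + (1 - \<beta> * (1 - b)) *\<^sub>R Q2 + (\<beta> * c) *\<^sub>R Q3"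
    unfolding assms(6) by (simp add: algebra_simps)
  ultimately have meet: "(1 - \<beta>) *\<^sub>R Q2 + \<beta> *\<^sub>R Q4 = (1 - \<alpha>) *\<^sub>R Q1 + \<alpha> *\<^sub>R Q3"
    by simp
  have "Q1 \<noteq> Q3"
    using assms(1) unfolding collinear_3_expand by blast
  moreover have "Q2 \<noteq> Q4"
  proof
    assume "Q2 = Q4"
    then have "Q2 = (1 - \<alpha>) *\<^sub>R Q1 + (1 - (1 - \<alpha>)) *\<^sub>R Q3"
      using meet by (simp add: algebra_simps)
    then have "collinear {Q1, Q2, Q3}"
      unfolding collinear_3_expand by blast
    with assms(1) show False ..
  qed
  ultimately have "(1 - \<alpha>) *\<^sub>R Q1 + \<alpha> *\<^sub>R Q3 \<in> open_segment Q1 Q3 \<inter> open_segment Q2 Q4"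
    using \<alpha> \<beta>(1,2) meet[symmetric] unfolding Int_iff in_segment(2) by blast
  then show ?thesis
    by blast
qed

lemma convex_quad_iff:
  "convex_quad Q1 Q2 Q3 Q4 \<longleftrightarrow> \<not> collinear {Q1, Q2, Q3} \<and>
     (\<exists>a b c. 0 < a \<and> b < 0 \<and> 0 < c \<and> a + b + c = 1 \<and> Q4 = a *\<^sub>R Q1 + b *\<^sub>R Q2 + c *\<^sub>R Q3)"
    (is "_ \<longleftrightarrow> _ \<and> ?fourth")
proof
  assume quad: "convex_quad Q1 Q2 Q3 Q4"
  then obtain a b c where abc: "0 < a" "b < 0" "0 < c" "a + b + c = 1"
    "Q4 = a *\<^sub>R Q1 + b *\<^sub>R Q2 + c *\<^sub>R Q3"
    unfolding convex_quad_def using diagonals_meet_imp_fourth_vertex by blast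
  then have "Q4 \<in> affine hull {Q1, Q2, Q3}"
    unfolding affine_hull_3 by blast
  then have "{Q1, Q2, Q3, Q4} \<subseteq> affine hull {Q1, Q2, Q3}"
    by (simp add: hull_inc)
  then have "collinear {Q1, Q2, Q3} \<Longrightarrow> collinear {Q1, Q2, Q3, Q4}"
    using collinear_affine_hull_collinear collinear_subset by blast
  with quad abc show "\<not> collinear {Q1, Q2, Q3} \<and> ?fourth"
    unfolding convex_quad_def by blast
next
  assume "\<not> collinear {Q1, Q2, Q3} \<and> ?fourth"
  then have "open_segment Q1 Q3 \<inter> open_segment Q2 Q4 \<noteq> {}" "\<not> collinear {Q1, Q2, Q3}"
    using fourth_vertex_imp_diagonals_meet by blast+
  moreover have "\<not> collinear {Q1, Q2, Q3, Q4}"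
    using \<open>\<not> collinear {Q1, Q2, Q3}\<close> collinear_subset[of "{Q1, Q2, Q3, Q4}" "{Q1, Q2, Q3}"]
    by blast
  ultimately show "convex_quad Q1 Q2 Q3 Q4"
    unfolding convex_quad_def by blast
qed

lemma convex_quad_not_collinear: "convex_quad A B C D \<Longrightarrow> \<not> collinear {A, B, C}"
  by (simp add: convex_quad_iff)

lemma convex_quad_distinct:
  assumes "convex_quad A B C D"
  shows "A \<noteq> B" "B \<noteq> C" "C \<noteq> D" "D \<noteq> A"
proof -
  have "convex_quad B C D A" "convex_quad C D A B" "convex_quad D A B C"
    using assms convex_quad_rotate by blast+
  then have "\<not> collinear {A, B, C}" "\<not> collinear {B, C, D}" "\<not> collinear {C, D, A}"
    "\<not> collinear {D, A, B}"
    using assms convex_quad_not_collinear by blast+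
  then show "A \<noteq> B" "B \<noteq> C" "C \<noteq> D" "D \<noteq> A"
    by (auto simp: collinear_2)
qed

lemma aff_dim_three_points_le: "aff_dim {a, b, c :: 'a::euclidean_space} \<le> 2"
proof -
  have "card {a, b, c} \<le> 3"
    by (simp add: card_insert_le_m1)
  then show ?thesis
    using aff_dim_le_card[of "{a, b, c}"] by simp
qed

lemma affine_hull_convex_quad:
  assumes "convex_quad Q1 Q2 Q3 Q4"
  shows "affine hull {Q1, Q2, Q3, Q4} = affine hull {Q1, Q2, Q3}"
proof -
  have "Q4 \<in> affine hull {Q1, Q2, Q3}"
    using assms unfolding convex_quad_iff affine_hull_3 by blast
  then show ?thesis
    using hull_redundant[of Q4 affine "{Q1, Q2, Q3}"] by (simp add: insert_commute)
qed

lemma aff_dim_convex_quad: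
  assumes "convex_quad Q1 Q2 Q3 Q4"
  shows "aff_dim (affine hull {Q1, Q2, Q3, Q4}) \<le> 2"
  by (simp add: affine_hull_convex_quad[OF assms] aff_dim_three_points_le)

lemma collinear_injective_affine_image:
  assumes "linear f" "inj f"
  shows "collinear {f A + d, f B + d, f C + d} \<longleftrightarrow> collinear {A, B, C}"
proof -
  have image: "u *\<^sub>R (f A + d) + (1 - u) *\<^sub>R (f C + d) = f (u *\<^sub>R A + (1 - u) *\<^sub>R C) + d" for u
    by (simp add: linear_add[OF assms(1)] linear_scale[OF assms(1)]) (simp add: algebra_simps)
  show ?thesis
    unfolding collinear_3_expand image using assms(2) by (auto simp: inj_eq)
qed

lemma convex_quad_injective_affine_image:
  assumes "linear f" "inj f" "convex_quad A B C D"
  shows "convex_quad (f A + d) (f B + d) (f C + d) (f D + d)"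
proof -
  obtain a b c where abc: "0 < a" "b < 0" "0 < c" "a + b + c = 1"
    and D: "D = a *\<^sub>R A + b *\<^sub>R B + c *\<^sub>R C"
    using assms(3) unfolding convex_quad_iff by blast
  have "f D + d = a *\<^sub>R (f A + d) + b *\<^sub>R (f B + d) + c *\<^sub>R (f C + d)"
  proof -
    have "d = (a + b + c) *\<^sub>R d"
      using abc(4) by simp
    then show ?thesis
      unfolding D linear_add[OF assms(1)] linear_scale[OF assms(1)] by (simp add: algebra_simps)
  qed
  moreover have "\<not> collinear {f A + d, f B + d, f C + d}"
    using collinear_injective_affine_image[OF assms(1,2)] convex_quad_not_collinear[OF assms(3)]
    by simp
  ultimately show ?thesis
    using abc unfolding convex_quad_iff by blast
qed

section \<open>Planes through a vertex\<close>

lemma collinear_if_combination: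
  assumes "x *\<^sub>R (A - C) + y *\<^sub>R (B - C) = 0" "x \<noteq> 0 \<or> y \<noteq> 0"
  shows "collinear {A, B, C}"
proof (cases "y = 0")
  case True
  then show ?thesis
    unfolding collinear_3_expand using assms by simp
next
  case False
  have "y *\<^sub>R (B - C) = - (x *\<^sub>R (A - C))"
    using assms(1) by (simp add: eq_neg_iff_add_eq_0 add.commute)
  then have "B - C = (1 / y) *\<^sub>R (- (x *\<^sub>R (A - C)))"
    using False by (metis divide_self_if nonzero_eq_divide_eq scaleR_one scaleR_scaleR)
  then have "B = (- x / y) *\<^sub>R A + (1 - (- x / y)) *\<^sub>R C"
    by (simp add: algebra_simps)
  then show ?thesis
    unfolding collinear_3_expand by blast
qed

lemma nontrivial_combination_imp_collinear_or_coplanar: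
  assumes "x \<noteq> 0 \<or> y \<noteq> 0 \<or> z \<noteq> 0" "x *\<^sub>R Q1 + y *\<^sub>R Q2 + z *\<^sub>R Q3 = (x + y + z) *\<^sub>R X"
  shows "collinear {Q1, Q2, Q3} \<or> X \<in> affine hull {Q1, Q2, Q3}"
proof (cases "x + y + z = 0")
  case False
  define s where "s = x + y + z"
  have "X = (1 / s) *\<^sub>R (s *\<^sub>R X)"
    using False by (simp add: s_def)
  also have "\<dots> = (x / s) *\<^sub>R Q1 + (y / s) *\<^sub>R Q2 + (z / s) *\<^sub>R Q3"
    unfolding s_def assms(2)[symmetric] by (simp add: scaleR_add_right)
  finally have "X = (x / s) *\<^sub>R Q1 + (y / s) *\<^sub>R Q2 + (z / s) *\<^sub>R Q3" .
  moreover have "x / s + y / s + z / s = 1"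
    using False by (simp add: s_def add_divide_distrib[symmetric])
  ultimately show ?thesis
    unfolding affine_hull_3 by blast
next
  case True
  have "x *\<^sub>R (Q1 - Q3) + y *\<^sub>R (Q2 - Q3)
      = x *\<^sub>R Q1 + y *\<^sub>R Q2 + z *\<^sub>R Q3 - (x + y + z) *\<^sub>R Q3"
    by (simp add: algebra_simps)
  then have "x *\<^sub>R (Q1 - Q3) + y *\<^sub>R (Q2 - Q3) = 0"
    using assms(2) True by simp
  moreover have "x \<noteq> 0 \<or> y \<noteq> 0"
    using assms(1) True by auto
  ultimately show ?thesis
    by (blast intro: collinear_if_combination)
qed

lemma triple_eq_0_iff_collinear_or_coplanar:
  "triple (Q1 - X) (Q2 - X) (Q3 - X) = 0 \<longleftrightarrow>
     collinear {Q1, Q2, Q3} \<or> X \<in> affine hull {Q1, Q2, Q3}"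
proof -
  have comb: "x *\<^sub>R (Q1 - X) + y *\<^sub>R (Q2 - X) + z *\<^sub>R (Q3 - X) = 0 \<longleftrightarrow>
      x *\<^sub>R Q1 + y *\<^sub>R Q2 + z *\<^sub>R Q3 = (x + y + z) *\<^sub>R X" for x y z
    by (auto simp: algebra_simps)
  show ?thesis
  proof
    assume "triple (Q1 - X) (Q2 - X) (Q3 - X) = 0"
    then show "collinear {Q1, Q2, Q3} \<or> X \<in> affine hull {Q1, Q2, Q3}"
      unfolding triple_eq_0_iff_dependent comb
      using nontrivial_combination_imp_collinear_or_coplanar by blast
  next
    assume "collinear {Q1, Q2, Q3} \<or> X \<in> affine hull {Q1, Q2, Q3}"
    then have "\<exists>x y z. (x \<noteq> 0 \<or> y \<noteq> 0 \<or> z \<noteq> 0) \<and>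
        x *\<^sub>R Q1 + y *\<^sub>R Q2 + z *\<^sub>R Q3 = (x + y + z) *\<^sub>R X"
      unfolding collinear_3_expand affine_hull_3 mem_Collect_eq
    proof (elim disjE exE conjE)
      assume "Q1 = Q3"
      then show ?thesis
        by (intro exI[of _ 1] exI[of _ 0] exI[of _ "-1"]) simp
    next
      fix u assume "Q2 = u *\<^sub>R Q1 + (1 - u) *\<^sub>R Q3"
      then show ?thesis
        by (intro exI[of _ u] exI[of _ "-1"] exI[of _ "1 - u"]) (simp add: algebra_simps)
    next
      fix a b c assume "X = a *\<^sub>R Q1 + b *\<^sub>R Q2 + c *\<^sub>R Q3" "a + b + c = 1"
      then show ?thesis
        by (intro exI[of _ a] exI[of _ b] exI[of _ c]) auto
    qed
    then show "triple (Q1 - X) (Q2 - X) (Q3 - X) = 0"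
      unfolding triple_eq_0_iff_dependent comb .
  qed
qed

lemma plane_eq_affine_hull:
  fixes P :: "'a::euclidean_space set"
  assumes "affine P" "aff_dim P \<le> 2" "{a, b, c} \<subseteq> P" "\<not> collinear {a, b, c}"
  shows "P = affine hull {a, b, c}"
proof -
  have "a \<noteq> b" "a \<noteq> c" "b \<noteq> c" "\<not> affine_dependent {a, b, c}"
    using assms(4) collinear_3_eq_affine_dependent by blast+
  then have "\<not> affine_dependent {a, b, c}" "card {a, b, c} = 3"
    by simp_all
  then have "aff_dim (affine hull {a, b, c}) = 2"
    using aff_dim_affine_independent by fastforce
  moreover have "affine hull {a, b, c} \<subseteq> P"
    using assms(1,3) hull_minimal by blast
  ultimately show ?thesis
    using affine_dim_equal[OF affine_affine_hull assms(1)] aff_dim_subset assms(2)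
    by (metis antisym empty_not_insert hull_subset subset_empty)
qed

lemma affine_mem_line:
  assumes "affine S" "x \<in> S" "x + v \<in> S"
  shows "x + s *\<^sub>R v \<in> S"
proof -
  have "x + s *\<^sub>R v = (1 - s) *\<^sub>R x + s *\<^sub>R (x + v)"
    by (simp add: algebra_simps)
  then show ?thesis
    using mem_affine[OF assms, of "1 - s" s] by simp
qed

lemma plane_through_apex_and_edge:
  assumes "Q \<noteq> Q'" "{Q, Q'} \<subseteq> S" "X \<notin> affine hull S"
    and "affine P" "aff_dim P \<le> 2" "{X, Q, Q'} \<subseteq> P"
  shows "P = affine hull {X, Q, Q'}"
proof (rule plane_eq_affine_hull[OF assms(4-6)])
  show "\<not> collinear {X, Q, Q'}"
  proof
    assume "collinear {X, Q, Q'}"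
    then have "X \<in> affine hull {Q, Q'}"
      using collinear_3_affine_hull[OF assms(1)] by (simp add: insert_commute)
    then show False
      using assms(2,3) hull_mono by blast
  qed
qed

lemma edge_direction:
  assumes quad: "convex_quad Q1 Q2 Q3 Q4" and apex: "X \<notin> affine hull {Q1, Q2, Q3, Q4}"
    and E: "E \<in> affine hull {X, Q4, Q1}" "E \<in> affine hull {X, Q1, Q2}" "E \<noteq> X"
  shows "\<exists>l. Q1 - X = l *\<^sub>R (E - X)"
proof (cases "collinear {X, E, Q1}")
  case True
  then obtain u v where "u + v = 1" "Q1 = u *\<^sub>R X + v *\<^sub>R E"
    using collinear_3_affine_hull[of X E Q1] E(3) unfolding affine_hull_2 by auto
  moreover from this(1) have "u = 1 - v"
    by simp
  ultimately have "Q1 - X = v *\<^sub>R (E - X)"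
    by (simp add: algebra_simps)
  then show ?thesis ..
next
  case False
  \<comment> \<open>otherwise both face planes through the edge X Q1 equal the plane X E Q1, which then
    contains Q4, Q1, Q2 and X\<close>
  have planes: "affine hull {X, Q4, Q1} = affine hull {X, E, Q1}"
      "affine hull {X, Q1, Q2} = affine hull {X, E, Q1}"
    by (rule plane_eq_affine_hull; use E False in \<open>simp add: aff_dim_three_points_le hull_inc\<close>)+
  have "Q2 \<in> affine hull {X, Q1, Q2}" "Q4 \<in> affine hull {X, Q4, Q1}" "Q1 \<in> affine hull {X, Q4, Q1}"
    by (simp_all add: hull_inc)
  then have "{Q4, Q1, Q2} \<subseteq> affine hull {X, Q4, Q1}"
    unfolding planes by simp
  moreover have "\<not> collinear {Q4, Q1, Q2}"
    using quad convex_quad_rotate convex_quad_not_collinear by blast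
  moreover have "aff_dim (affine hull {X, Q4, Q1}) \<le> 2"
    by (simp add: aff_dim_three_points_le)
  ultimately have "affine hull {X, Q4, Q1} = affine hull {Q4, Q1, Q2}"
    by (metis plane_eq_affine_hull affine_affine_hull)
  moreover have "X \<in> affine hull {X, Q4, Q1}"
    by (simp add: hull_inc)
  moreover have "affine hull {Q4, Q1, Q2} \<subseteq> affine hull {Q1, Q2, Q3, Q4}"
    by (rule hull_mono) blast
  ultimately show ?thesis
    using apex by blast
qed

section \<open>Four-hedral angles\<close>

lemma convex_combination_in_convex_hull_4:
  assumes "0 \<le> u" "0 \<le> v" "0 \<le> w" "0 \<le> x" "u + v + w + x = 1"
  shows "u *\<^sub>R a + v *\<^sub>R b + w *\<^sub>R c + x *\<^sub>R d \<in> convex hull {a, b, c, d}"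
proof (cases "u = 1")
  case True
  then have "v = 0" "w = 0" "x = 0"
    using assms by linarith+
  then show ?thesis
    using True by (simp add: hull_inc)
next
  case False
  define s where "s = 1 - u"
  have "0 < s"
    using assms False by (simp add: s_def)
  have "v / s + w / s + x / s = 1"
    using assms \<open>0 < s\<close> by (simp add: s_def add_divide_distrib[symmetric])
  then have "(v / s) *\<^sub>R b + (w / s) *\<^sub>R c + (x / s) *\<^sub>R d \<in> convex hull {b, c, d}"
    unfolding convex_hull_3 using assms \<open>0 < s\<close> by fastforce
  moreover have "u *\<^sub>R a + v *\<^sub>R b + w *\<^sub>R c + x *\<^sub>R d
      = u *\<^sub>R a + s *\<^sub>R ((v / s) *\<^sub>R b + (w / s) *\<^sub>R c + (x / s) *\<^sub>R d)"
    using \<open>0 < s\<close> by (simp add: scaleR_add_right)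
  moreover have "0 \<le> s" "u + s = 1"
    using \<open>0 < s\<close> by (simp_all add: s_def)
  ultimately show ?thesis
    unfolding convex_hull_insert[of "{b, c, d}" a, simplified] using assms(1) by blast
qed

lemma convex_hull_4:
  "convex hull {a, b, c, d} =
     {u *\<^sub>R a + v *\<^sub>R b + w *\<^sub>R c + x *\<^sub>R d | u v w x.
        0 \<le> u \<and> 0 \<le> v \<and> 0 \<le> w \<and> 0 \<le> x \<and> u + v + w + x = 1}"
proof (intro equalityI subsetI)
  fix p
  assume "p \<in> convex hull {a, b, c, d}"
  then obtain u v q where uv: "0 \<le> u" "0 \<le> v" "u + v = 1" "q \<in> convex hull {b, c, d}"
    "p = u *\<^sub>R a + v *\<^sub>R q"
    using convex_hull_insert[of "{b, c, d}" a] by auto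
  then obtain x y z where xyz: "0 \<le> x" "0 \<le> y" "0 \<le> z" "x + y + z = 1"
    "q = x *\<^sub>R b + y *\<^sub>R c + z *\<^sub>R d"
    unfolding convex_hull_3 by blast
  have "p = u *\<^sub>R a + (v * x) *\<^sub>R b + (v * y) *\<^sub>R c + (v * z) *\<^sub>R d"
    using uv(5) xyz(5) by (simp add: scaleR_add_right)
  moreover have "u + v * x + v * y + v * z = 1"
    using uv(3) xyz(4) by (metis add.assoc distrib_left mult.right_neutral)
  ultimately show "p \<in> {u *\<^sub>R a + v *\<^sub>R b + w *\<^sub>R c + x *\<^sub>R d | u v w x.
      0 \<le> u \<and> 0 \<le> v \<and> 0 \<le> w \<and> 0 \<le> x \<and> u + v + w + x = 1}"
    using uv xyz by fastforce
next
  fix p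
  assume "p \<in> {u *\<^sub>R a + v *\<^sub>R b + w *\<^sub>R c + x *\<^sub>R d | u v w x.
      0 \<le> u \<and> 0 \<le> v \<and> 0 \<le> w \<and> 0 \<le> x \<and> u + v + w + x = 1}"
  then show "p \<in> convex hull {a, b, c, d}"
    by (elim CollectE exE conjE) (simp add: convex_combination_in_convex_hull_4)
qed

lemma affine_combination_diff:
  fixes Q1 Q2 Q3 Q4 X :: "'a::real_vector"
  assumes "a + b + c + d = 1"
  shows "a *\<^sub>R Q1 + b *\<^sub>R Q2 + c *\<^sub>R Q3 + d *\<^sub>R Q4 - X =
    a *\<^sub>R (Q1 - X) + b *\<^sub>R (Q2 - X) + c *\<^sub>R (Q3 - X) + d *\<^sub>R (Q4 - X)"
proof -
  have "X = (a + b + c + d) *\<^sub>R X"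
    unfolding assms by simp
  then show ?thesis
    by (simp add: algebra_simps)
qed

lemma cone_point_mem_hedral_angle:
  assumes m: "0 \<le> m1" "0 \<le> m2" "0 \<le> m3" "0 \<le> m4"
  shows "X + (m1 *\<^sub>R (Q1 - X) + m2 *\<^sub>R (Q2 - X) + m3 *\<^sub>R (Q3 - X) + m4 *\<^sub>R (Q4 - X))
    \<in> hedral_angle X Q1 Q2 Q3 Q4" (is "?p \<in> _")
proof -
  define s where "s = m1 + m2 + m3 + m4"
  show ?thesis
  proof (cases "s = 0")
    case True
    then have "m1 = 0" "m2 = 0" "m3 = 0" "m4 = 0"
      using m by (simp_all add: s_def)
    then have "?p = X + 0 *\<^sub>R (Q1 - X)"
      by simp
    then show ?thesis
      unfolding hedral_angle_def by (blast intro: hull_inc)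
  next
    case False
    define q where "q = (m1 / s) *\<^sub>R Q1 + (m2 / s) *\<^sub>R Q2 + (m3 / s) *\<^sub>R Q3 + (m4 / s) *\<^sub>R Q4"
    have "0 < s"
      using False m by (simp add: s_def)
    have sum: "m1 / s + m2 / s + m3 / s + m4 / s = 1"
      using False by (simp add: s_def add_divide_distrib[symmetric])
    then have "q \<in> convex hull {Q1, Q2, Q3, Q4}"
      unfolding q_def convex_hull_4 using m \<open>0 < s\<close> by fastforce
    moreover have "?p = X + s *\<^sub>R (q - X)"
      unfolding q_def affine_combination_diff[OF sum] using False by (simp add: scaleR_add_right)
    ultimately show ?thesis
      unfolding hedral_angle_def using \<open>0 < s\<close> by fastforce
  qed
qed

lemma hedral_angle_eq:
  "hedral_angle X Q1 Q2 Q3 Q4 =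
     {X + (m1 *\<^sub>R (Q1 - X) + m2 *\<^sub>R (Q2 - X) + m3 *\<^sub>R (Q3 - X) + m4 *\<^sub>R (Q4 - X)) | m1 m2 m3 m4.
        0 \<le> m1 \<and> 0 \<le> m2 \<and> 0 \<le> m3 \<and> 0 \<le> m4}"
proof (intro equalityI subsetI)
  fix p
  assume "p \<in> hedral_angle X Q1 Q2 Q3 Q4"
  then obtain s a b c d where "0 \<le> s" "0 \<le> a" "0 \<le> b" "0 \<le> c" "0 \<le> d"
    and sum: "a + b + c + d = 1"
    and p: "p = X + s *\<^sub>R (a *\<^sub>R Q1 + b *\<^sub>R Q2 + c *\<^sub>R Q3 + d *\<^sub>R Q4 - X)"
    unfolding hedral_angle_def convex_hull_4 by blast
  have "p = X + ((s * a) *\<^sub>R (Q1 - X) + (s * b) *\<^sub>R (Q2 - X) + (s * c) *\<^sub>R (Q3 - X)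
      + (s * d) *\<^sub>R (Q4 - X))"
    unfolding p affine_combination_diff[OF sum] by (simp add: scaleR_add_right)
  moreover have "0 \<le> s * a" "0 \<le> s * b" "0 \<le> s * c" "0 \<le> s * d"
    using \<open>0 \<le> s\<close> \<open>0 \<le> a\<close> \<open>0 \<le> b\<close> \<open>0 \<le> c\<close> \<open>0 \<le> d\<close> by simp_all
  ultimately show "p \<in> {X + (m1 *\<^sub>R (Q1 - X) + m2 *\<^sub>R (Q2 - X) + m3 *\<^sub>R (Q3 - X) + m4 *\<^sub>R (Q4 - X))
      | m1 m2 m3 m4. 0 \<le> m1 \<and> 0 \<le> m2 \<and> 0 \<le> m3 \<and> 0 \<le> m4}"
    by blast
next
  fix p
  assume "p \<in> {X + (m1 *\<^sub>R (Q1 - X) + m2 *\<^sub>R (Q2 - X) + m3 *\<^sub>R (Q3 - X) + m4 *\<^sub>R (Q4 - X))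
      | m1 m2 m3 m4. 0 \<le> m1 \<and> 0 \<le> m2 \<and> 0 \<le> m3 \<and> 0 \<le> m4}"
  then show "p \<in> hedral_angle X Q1 Q2 Q3 Q4"
    by (elim CollectE exE conjE) (simp add: cone_point_mem_hedral_angle)
qed

lemma mem_interior_hedral_angleD:
  assumes "p \<in> interior (hedral_angle X Q1 Q2 Q3 Q4)"
  shows "\<exists>m1 m2 m3 m4. 0 < m1 \<and> 0 < m2 \<and> 0 < m3 \<and> 0 < m4 \<and>
    p = X + (m1 *\<^sub>R (Q1 - X) + m2 *\<^sub>R (Q2 - X) + m3 *\<^sub>R (Q3 - X) + m4 *\<^sub>R (Q4 - X))"
proof -
  define w where "w = (Q1 - X) + (Q2 - X) + (Q3 - X) + (Q4 - X)"
  have "((\<lambda>\<delta>. p - \<delta> *\<^sub>R w) \<longlongrightarrow> p - 0 *\<^sub>R w) (at_right 0)"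
    by (intro tendsto_intros)
  then have "\<forall>\<^sub>F \<delta> in at_right 0. p - \<delta> *\<^sub>R w \<in> hedral_angle X Q1 Q2 Q3 Q4"
    using eventually_compose_filterlim[OF eventually_nhds_in_nhd]
      \<open>p \<in> interior (hedral_angle X Q1 Q2 Q3 Q4)\<close> by simp
  then have "\<forall>\<^sub>F \<delta> in at_right 0. 0 < \<delta> \<and> p - \<delta> *\<^sub>R w \<in> hedral_angle X Q1 Q2 Q3 Q4"
    using eventually_at_right_less eventually_conj by blast
  then obtain \<delta> :: real where "0 < \<delta>" "p - \<delta> *\<^sub>R w \<in> hedral_angle X Q1 Q2 Q3 Q4"
    using eventually_happens'[OF trivial_limit_at_right_real] by blast
  \<comment> \<open>adding \<delta> w back to a point of the angle makes all four coordinates positive\<close>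
  then obtain m1 m2 m3 m4 where m: "0 \<le> m1" "0 \<le> m2" "0 \<le> m3" "0 \<le> m4"
    and eq: "p - \<delta> *\<^sub>R w = X + (m1 *\<^sub>R (Q1 - X) + m2 *\<^sub>R (Q2 - X) + m3 *\<^sub>R (Q3 - X) + m4 *\<^sub>R (Q4 - X))"
    unfolding hedral_angle_eq by blast
  have "p = (p - \<delta> *\<^sub>R w) + \<delta> *\<^sub>R w"
    by simp
  also have "\<dots> = X + ((m1 + \<delta>) *\<^sub>R (Q1 - X) + (m2 + \<delta>) *\<^sub>R (Q2 - X)
      + (m3 + \<delta>) *\<^sub>R (Q3 - X) + (m4 + \<delta>) *\<^sub>R (Q4 - X))"
    by (simp only: eq) (simp add: w_def algebra_simps)
  finally have p: "p = X + ((m1 + \<delta>) *\<^sub>R (Q1 - X) + (m2 + \<delta>) *\<^sub>R (Q2 - X)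
      + (m3 + \<delta>) *\<^sub>R (Q3 - X) + (m4 + \<delta>) *\<^sub>R (Q4 - X))" .
  have pos: "0 < m1 + \<delta>" "0 < m2 + \<delta>" "0 < m3 + \<delta>" "0 < m4 + \<delta>"
    using m \<open>0 < \<delta>\<close> by linarith+
  show ?thesis
    by (rule exI[of _ "m1 + \<delta>"], rule exI[of _ "m2 + \<delta>"], rule exI[of _ "m3 + \<delta>"],
        rule exI[of _ "m4 + \<delta>"]) (use p pos in simp)
qed

lemma mem_interior_hedral_angleI:
  assumes nonzero: "triple (Q1 - X) (Q2 - X) (Q3 - X) \<noteq> 0"
    and m: "0 < m1" "0 < m2" "0 < m3" "0 < m4"
  shows "X + (m1 *\<^sub>R (Q1 - X) + m2 *\<^sub>R (Q2 - X) + m3 *\<^sub>R (Q3 - X) + m4 *\<^sub>R (Q4 - X))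
    \<in> interior (hedral_angle X Q1 Q2 Q3 Q4)" (is "?p \<in> _")
proof -
  define c where "c = X + m4 *\<^sub>R (Q4 - X)"
  have "?p - c = m1 *\<^sub>R (Q1 - X) + m2 *\<^sub>R (Q2 - X) + m3 *\<^sub>R (Q3 - X)"
    unfolding c_def by (simp add: algebra_simps)
  moreover have "((\<lambda>y. y - c) \<longlongrightarrow> ?p - c) (nhds ?p)"
    by (intro tendsto_intros filterlim_ident)
  ultimately have "((\<lambda>y. y - c) \<longlongrightarrow> m1 *\<^sub>R (Q1 - X) + m2 *\<^sub>R (Q2 - X) + m3 *\<^sub>R (Q3 - X)) (nhds ?p)"
    by (simp only:)
  then have "\<forall>\<^sub>F y in nhds ?p. \<exists>a\<in>{0<..}. \<exists>b\<in>{0<..}. \<exists>d\<in>{0<..}.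
      y - c = a *\<^sub>R (Q1 - X) + b *\<^sub>R (Q2 - X) + d *\<^sub>R (Q3 - X)"
    using m nonzero
    by (intro eventually_triple_coordinates_in[where a = m1 and b = m2 and c = m3,
          OF tendsto_const tendsto_const tendsto_const]) auto
  then have "\<forall>\<^sub>F y in nhds ?p. y \<in> hedral_angle X Q1 Q2 Q3 Q4"
  proof eventually_elim
    case (elim y)
    then obtain a b d where "0 < a" "0 < b" "0 < d"
      and "y - c = a *\<^sub>R (Q1 - X) + b *\<^sub>R (Q2 - X) + d *\<^sub>R (Q3 - X)"
      by auto
    then have "y = X + (a *\<^sub>R (Q1 - X) + b *\<^sub>R (Q2 - X) + d *\<^sub>R (Q3 - X) + m4 *\<^sub>R (Q4 - X))"
      unfolding c_def by (simp add: algebra_simps eq_diff_eq)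
    moreover have "0 \<le> a" "0 \<le> b" "0 \<le> d" "0 \<le> m4"
      using \<open>0 < a\<close> \<open>0 < b\<close> \<open>0 < d\<close> \<open>0 < m4\<close> by simp_all
    ultimately show ?case
      unfolding hedral_angle_eq by blast
  qed
  then obtain S where "open S" "?p \<in> S" "\<forall>y\<in>S. y \<in> hedral_angle X Q1 Q2 Q3 Q4"
    unfolding eventually_nhds by blast
  then show ?thesis
    by (intro interiorI[of S]) auto
qed

section \<open>Admissible angles through their edge vectors\<close>

text \<open>Edge vectors v1, ..., v4, in cyclic order, of a convex 4-hedral angle whose interior
  meets the isotropic line through the apex.\<close>

definition admissible_edges :: "real^3 \<Rightarrow> real^3 \<Rightarrow> real^3 \<Rightarrow> real^3 \<Rightarrow> bool" where
  "admissible_edges v1 v2 v3 v4 \<longleftrightarrow>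
     triple v1 v2 v3 \<noteq> 0 \<and>
     (\<exists>a b c. 0 < a \<and> b < 0 \<and> 0 < c \<and> v4 = a *\<^sub>R v1 + b *\<^sub>R v2 + c *\<^sub>R v3) \<and>
     (\<exists>\<tau> m1 m2 m3 m4. 0 < m1 \<and> 0 < m2 \<and> 0 < m3 \<and> 0 < m4 \<and>
        \<tau> *\<^sub>R e3 = m1 *\<^sub>R v1 + m2 *\<^sub>R v2 + m3 *\<^sub>R v3 + m4 *\<^sub>R v4)"

lemma admissible_edges_of_angle:
  assumes quad: "convex_quad Q1 Q2 Q3 Q4" and apex: "X \<notin> affine hull {Q1, Q2, Q3, Q4}"
    and isotropic: "X + \<tau> *\<^sub>R e3 \<in> interior (hedral_angle X Q1 Q2 Q3 Q4)"
  shows "admissible_edges (Q1 - X) (Q2 - X) (Q3 - X) (Q4 - X)"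
proof -
  have nonzero: "triple (Q1 - X) (Q2 - X) (Q3 - X) \<noteq> 0"
    using convex_quad_not_collinear[OF quad] apex
    by (simp add: triple_eq_0_iff_collinear_or_coplanar affine_hull_convex_quad[OF quad])
  obtain a b c where abc: "0 < a" "b < 0" "0 < c" "a + b + c = 1"
    "Q4 = a *\<^sub>R Q1 + b *\<^sub>R Q2 + c *\<^sub>R Q3"
    using quad unfolding convex_quad_iff by blast
  have "Q4 - X = a *\<^sub>R (Q1 - X) + b *\<^sub>R (Q2 - X) + c *\<^sub>R (Q3 - X)"
  proof -
    have "X = (a + b + c) *\<^sub>R X"
      using abc(4) by simp
    then show ?thesis
      unfolding abc(5) by (simp add: algebra_simps)
  qed
  moreover obtain m1 m2 m3 m4 where "0 < m1" "0 < m2" "0 < m3" "0 < m4"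
    "X + \<tau> *\<^sub>R e3 = X + (m1 *\<^sub>R (Q1 - X) + m2 *\<^sub>R (Q2 - X) + m3 *\<^sub>R (Q3 - X) + m4 *\<^sub>R (Q4 - X))"
    using mem_interior_hedral_angleD[OF isotropic] by blast
  moreover from this(5) have
    "\<tau> *\<^sub>R e3 = m1 *\<^sub>R (Q1 - X) + m2 *\<^sub>R (Q2 - X) + m3 *\<^sub>R (Q3 - X) + m4 *\<^sub>R (Q4 - X)"
    by simp
  ultimately show ?thesis
    unfolding admissible_edges_def using nonzero abc(1-3) by blast
qed

lemma admissible_angle_planesI:
  assumes quad: "convex_quad Q1 Q2 Q3 Q4" and apex: "X \<notin> affine hull {Q1, Q2, Q3, Q4}"
    and isotropic: "X + \<tau> *\<^sub>R e3 \<in> interior (hedral_angle X Q1 Q2 Q3 Q4)"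
    and P1: "affine P1" "aff_dim P1 \<le> 2" "{X, Q1, Q2} \<subseteq> P1"
    and P2: "affine P2" "aff_dim P2 \<le> 2" "{X, Q2, Q3} \<subseteq> P2"
    and P3: "affine P3" "aff_dim P3 \<le> 2" "{X, Q3, Q4} \<subseteq> P3"
    and P4: "affine P4" "aff_dim P4 \<le> 2" "{X, Q4, Q1} \<subseteq> P4"
  shows "admissible_angle_planes X P1 P2 P3 P4"
proof -
  note edge_plane = plane_through_apex_and_edge[where S = "{Q1, Q2, Q3, Q4}", OF _ _ apex]
  have "P1 = affine hull {X, Q1, Q2}" "P2 = affine hull {X, Q2, Q3}"
      "P3 = affine hull {X, Q3, Q4}" "P4 = affine hull {X, Q4, Q1}"
    by (rule edge_plane; use convex_quad_distinct[OF quad] P1 P2 P3 P4 in simp)+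
  then show ?thesis
    unfolding admissible_angle_planes_def using quad apex isotropic by blast
qed

lemma admissible_angle_planes_of_edges:
  assumes edges: "admissible_edges v1 v2 v3 v4"
    and P1: "affine P1" "aff_dim P1 \<le> 2" "{X, X + v1, X + v2} \<subseteq> P1"
    and P2: "affine P2" "aff_dim P2 \<le> 2" "{X, X + v2, X + v3} \<subseteq> P2"
    and P3: "affine P3" "aff_dim P3 \<le> 2" "{X, X + v3, X + v4} \<subseteq> P3"
    and P4: "affine P4" "aff_dim P4 \<le> 2" "{X, X + v4, X + v1} \<subseteq> P4"
  shows "admissible_angle_planes X P1 P2 P3 P4"
proof -
  obtain a b c \<tau> m1 m2 m3 m4 where nonzero: "triple v1 v2 v3 \<noteq> 0"
    and abc: "0 < a" "b < 0" "0 < c" "v4 = a *\<^sub>R v1 + b *\<^sub>R v2 + c *\<^sub>R v3"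
    and m: "0 < m1" "0 < m2" "0 < m3" "0 < m4"
      "\<tau> *\<^sub>R e3 = m1 *\<^sub>R v1 + m2 *\<^sub>R v2 + m3 *\<^sub>R v3 + m4 *\<^sub>R v4"
    using edges unfolding admissible_edges_def by blast
  \<comment> \<open>rescaling the edges makes Q1 Q2 Q3 Q4 a parallelogram: Q4 = Q1 - Q2 + Q3\<close>
  define Q1 Q2 Q3 Q4 where "Q1 = X + a *\<^sub>R v1" and "Q2 = X + (- b) *\<^sub>R v2"
    and "Q3 = X + c *\<^sub>R v3" and "Q4 = X + 1 *\<^sub>R v4"
  have "triple (Q1 - X) (Q2 - X) (Q3 - X) = a * (- b) * c * triple v1 v2 v3"
    unfolding Q1_def Q2_def Q3_def add_diff_cancel_left' by (rule triple_scaleR)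
  then have "triple (Q1 - X) (Q2 - X) (Q3 - X) \<noteq> 0"
    using nonzero abc by simp
  then have "\<not> collinear {Q1, Q2, Q3}" and "X \<notin> affine hull {Q1, Q2, Q3}"
    by (simp_all add: triple_eq_0_iff_collinear_or_coplanar)
  moreover have "Q4 = 1 *\<^sub>R Q1 + (- 1) *\<^sub>R Q2 + 1 *\<^sub>R Q3"
    by (simp add: Q1_def Q2_def Q3_def Q4_def abc(4) algebra_simps)
  ultimately have quad: "convex_quad Q1 Q2 Q3 Q4"
    unfolding convex_quad_iff by (intro conjI exI[of _ 1] exI[of _ "-1"]) auto
  have apex: "X \<notin> affine hull {Q1, Q2, Q3, Q4}"
    by (simp add: affine_hull_convex_quad[OF quad] \<open>X \<notin> affine hull {Q1, Q2, Q3}\<close>)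
  have sub: "{X, Q1, Q2} \<subseteq> P1" "{X, Q2, Q3} \<subseteq> P2" "{X, Q3, Q4} \<subseteq> P3" "{X, Q4, Q1} \<subseteq> P4"
    using P1 P2 P3 P4 unfolding Q1_def Q2_def Q3_def Q4_def by (blast intro: affine_mem_line)+
  have "X + \<tau> *\<^sub>R e3 = X + ((m1 / a) *\<^sub>R (Q1 - X) + (m2 / - b) *\<^sub>R (Q2 - X)
      + (m3 / c) *\<^sub>R (Q3 - X) + m4 *\<^sub>R (Q4 - X))"
    using abc(1-3) by (simp add: m(5) Q1_def Q2_def Q3_def Q4_def)
  also have "\<dots> \<in> interior (hedral_angle X Q1 Q2 Q3 Q4)"
    using \<open>triple (Q1 - X) (Q2 - X) (Q3 - X) \<noteq> 0\<close> m(1-4) abc(1-3)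
    by (intro mem_interior_hedral_angleI) (simp_all add: divide_pos_neg)
  finally show ?thesis
    by (rule admissible_angle_planesI[OF quad apex _ P1(1,2) sub(1) P2(1,2) sub(2) P3(1,2) sub(3)
          P4(1,2) sub(4)])
qed

lemma admissible_angle_planes_imp_admissible_edges:
  assumes "admissible_angle_planes X P1 P2 P3 P4"
    and E: "{X, E1, E2} \<subseteq> P1" "{X, E2, E3} \<subseteq> P2" "{X, E3, E4} \<subseteq> P3" "{X, E4, E1} \<subseteq> P4"
    and apart: "E1 \<noteq> X" "E2 \<noteq> X" "E3 \<noteq> X" "E4 \<noteq> X"
  shows "\<exists>l1 l2 l3 l4. admissible_edges
    (l1 *\<^sub>R (E1 - X)) (l2 *\<^sub>R (E2 - X)) (l3 *\<^sub>R (E3 - X)) (l4 *\<^sub>R (E4 - X))"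
proof -
  obtain Q1 Q2 Q3 Q4 \<tau> where quad: "convex_quad Q1 Q2 Q3 Q4"
    and apex: "X \<notin> affine hull {Q1, Q2, Q3, Q4}"
    and planes: "P1 = affine hull {X, Q1, Q2}" "P2 = affine hull {X, Q2, Q3}"
      "P3 = affine hull {X, Q3, Q4}" "P4 = affine hull {X, Q4, Q1}"
    and isotropic: "X + \<tau> *\<^sub>R e3 \<in> interior (hedral_angle X Q1 Q2 Q3 Q4)"
    using assms(1) unfolding admissible_angle_planes_def by blast
  have rotations: "convex_quad Q2 Q3 Q4 Q1" "convex_quad Q3 Q4 Q1 Q2" "convex_quad Q4 Q1 Q2 Q3"
    using quad convex_quad_rotate by blast+
  have "{Q2, Q3, Q4, Q1} = {Q1, Q2, Q3, Q4}" "{Q3, Q4, Q1, Q2} = {Q1, Q2, Q3, Q4}"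
    "{Q4, Q1, Q2, Q3} = {Q1, Q2, Q3, Q4}"
    by auto
  then have apexes: "X \<notin> affine hull {Q2, Q3, Q4, Q1}" "X \<notin> affine hull {Q3, Q4, Q1, Q2}"
    "X \<notin> affine hull {Q4, Q1, Q2, Q3}"
    using apex by simp_all
  obtain l1 l2 l3 l4 where "Q1 - X = l1 *\<^sub>R (E1 - X)" "Q2 - X = l2 *\<^sub>R (E2 - X)"
    "Q3 - X = l3 *\<^sub>R (E3 - X)" "Q4 - X = l4 *\<^sub>R (E4 - X)"
    using edge_direction[OF quad apex] edge_direction[OF rotations(1) apexes(1)]
      edge_direction[OF rotations(2) apexes(2)] edge_direction[OF rotations(3) apexes(3)]
      E apart unfolding planes by (metis insert_subset)
  then show ?thesis
    using admissible_edges_of_angle[OF quad apex isotropic] by metis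
qed

lemma eventually_admissible_edges:
  assumes v1: "(v1 \<longlongrightarrow> u1) F" and v2: "(v2 \<longlongrightarrow> u2) F" and v3: "(v3 \<longlongrightarrow> u3) F"
    and v4: "(v4 \<longlongrightarrow> u4) F" and "admissible_edges u1 u2 u3 u4"
  shows "\<forall>\<^sub>F t in F. admissible_edges (v1 t) (v2 t) (v3 t) (v4 t)"
proof -
  obtain a b c \<tau> m1 m2 m3 m4 where nonzero: "triple u1 u2 u3 \<noteq> 0"
    and abc: "0 < a" "b < 0" "0 < c" "u4 = a *\<^sub>R u1 + b *\<^sub>R u2 + c *\<^sub>R u3"
    and m: "0 < m1" "0 < m2" "0 < m3" "0 < m4"
      "\<tau> *\<^sub>R e3 - m4 *\<^sub>R u4 = m1 *\<^sub>R u1 + m2 *\<^sub>R u2 + m3 *\<^sub>R u3"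
    using \<open>admissible_edges u1 u2 u3 u4\<close> unfolding admissible_edges_def
    by (auto simp: algebra_simps)
  have "\<forall>\<^sub>F t in F. triple (v1 t) (v2 t) (v3 t) \<noteq> 0"
    using tendsto_imp_eventually_ne[OF tendsto_triple[OF v1 v2 v3] nonzero] .
  moreover have "\<forall>\<^sub>F t in F. \<exists>a\<in>{0<..}. \<exists>b\<in>{..<0}. \<exists>c\<in>{0<..}.
      v4 t = a *\<^sub>R v1 t + b *\<^sub>R v2 t + c *\<^sub>R v3 t"
    using v4 abc
    by (intro eventually_triple_coordinates_in[where a = a and b = b and c = c, OF v1 v2 v3 _ nonzero]) auto
  moreover have "((\<lambda>t. \<tau> *\<^sub>R e3 - m4 *\<^sub>R v4 t) \<longlongrightarrow> m1 *\<^sub>R u1 + m2 *\<^sub>R u2 + m3 *\<^sub>R u3) F"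
    unfolding m(5)[symmetric] using v4 by (intro tendsto_intros)
  then have "\<forall>\<^sub>F t in F. \<exists>r1\<in>{0<..}. \<exists>r2\<in>{0<..}. \<exists>r3\<in>{0<..}.
      \<tau> *\<^sub>R e3 - m4 *\<^sub>R v4 t = r1 *\<^sub>R v1 t + r2 *\<^sub>R v2 t + r3 *\<^sub>R v3 t"
    using m
    by (intro eventually_triple_coordinates_in[where a = m1 and b = m2 and c = m3, OF v1 v2 v3 _ nonzero]) auto
  ultimately show ?thesis
  proof eventually_elim
    case (elim t)
    then show ?case
      unfolding admissible_edges_def using \<open>0 < m4\<close>
      by (metis (no_types, lifting) diff_eq_eq greaterThan_iff lessThan_iff)
  qed
qed

lemma eventually_admissible_angle_planes:
  fixes X A B C D :: "real \<Rightarrow> real^3" and P1 P2 P3 P4 :: "real \<Rightarrow> (real^3) set"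
  assumes adm: "admissible_angle_planes (X s) (P1 s) (P2 s) (P3 s) (P4 s)"
    and cont: "isCont X s" "isCont A s" "isCont B s" "isCont C s" "isCont D s"
    and apart: "A s \<noteq> X s" "B s \<noteq> X s" "C s \<noteq> X s" "D s \<noteq> X s"
    and P1: "\<And>t. affine (P1 t)" "\<And>t. aff_dim (P1 t) \<le> 2" "\<And>t. {X t, A t, B t} \<subseteq> P1 t"
    and P2: "\<And>t. affine (P2 t)" "\<And>t. aff_dim (P2 t) \<le> 2" "\<And>t. {X t, B t, C t} \<subseteq> P2 t"
    and P3: "\<And>t. affine (P3 t)" "\<And>t. aff_dim (P3 t) \<le> 2" "\<And>t. {X t, C t, D t} \<subseteq> P3 t"
    and P4: "\<And>t. affine (P4 t)" "\<And>t. aff_dim (P4 t) \<le> 2" "\<And>t. {X t, D t, A t} \<subseteq> P4 t"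
  shows "\<forall>\<^sub>F t in nhds s. admissible_angle_planes (X t) (P1 t) (P2 t) (P3 t) (P4 t)"
proof -
  obtain l1 l2 l3 l4 where "admissible_edges
      (l1 *\<^sub>R (A s - X s)) (l2 *\<^sub>R (B s - X s)) (l3 *\<^sub>R (C s - X s)) (l4 *\<^sub>R (D s - X s))"
    using admissible_angle_planes_imp_admissible_edges[OF adm P1(3) P2(3) P3(3) P4(3) apart] by blast
  moreover have "((\<lambda>t. l *\<^sub>R (E t - X t)) \<longlongrightarrow> l *\<^sub>R (E s - X s)) (at s)" if "isCont E s" for l E
    using that cont(1) unfolding isCont_def by (intro tendsto_intros)
  ultimately have "\<forall>\<^sub>F t in at s. admissible_edges (l1 *\<^sub>R (A t - X t)) (l2 *\<^sub>R (B t - X t))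
      (l3 *\<^sub>R (C t - X t)) (l4 *\<^sub>R (D t - X t))"
    using cont by (intro eventually_admissible_edges) auto
  then have "\<forall>\<^sub>F t in at s. admissible_angle_planes (X t) (P1 t) (P2 t) (P3 t) (P4 t)"
  proof eventually_elim
    case (elim t)
    have "X t + l *\<^sub>R (E - X t) \<in> P" if "affine P" "X t \<in> P" "E \<in> P" for l E P
      using affine_mem_line[OF that(1,2), of "E - X t"] that(3) by simp
    then show ?case
      using P1 P2 P3 P4 by (intro admissible_angle_planes_of_edges[OF elim]) auto
  qed
  with adm show ?thesis
    by (simp add: eventually_nhds_conv_at)
qed

section \<open>Deforming nets\<close>

lemma iso_matrix_mult:
  "(iso_matrix \<phi> c1 c2 *v x) $ 1 = - \<phi> * x $ 2"
  "(iso_matrix \<phi> c1 c2 *v x) $ 2 = \<phi> * x $ 1"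
  "(iso_matrix \<phi> c1 c2 *v x) $ 3 = c1 * x $ 1 + c2 * x $ 2"
  unfolding iso_matrix_def matrix_vector_mult_def by (simp_all add: sum_3 vector_3)

lemma inj_id_plus_iso_matrix: "inj (\<lambda>x. x + t *\<^sub>R (iso_matrix \<phi> c1 c2 *v x))"
proof (rule injI)
  fix x y
  assume "x + t *\<^sub>R (iso_matrix \<phi> c1 c2 *v x) = y + t *\<^sub>R (iso_matrix \<phi> c1 c2 *v y)"
  define z where "z = x - y"
  have z0: "z + t *\<^sub>R (iso_matrix \<phi> c1 c2 *v z) = 0"
    unfolding z_def using \<open>x + _ = _\<close> by (simp add: algebra_simps)
  have z: "z$1 = t * \<phi> * z$2" "z$2 = - (t * \<phi> * z$1)" "z$3 + t * (c1 * z$1 + c2 * z$2) = 0"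
    using arg_cong[OF z0, of "\<lambda>v. v $ 1"] arg_cong[OF z0, of "\<lambda>v. v $ 2"]
      arg_cong[OF z0, of "\<lambda>v. v $ 3"]
    by (simp_all add: iso_matrix_mult algebra_simps)
  \<comment> \<open>the rotation part contributes the factor 1 + (t \<phi>)^2 > 0\<close>
  have "z$1 = t * \<phi> * (- (t * \<phi> * z$1))"
    using z(1) by (subst (asm) z(2))
  then have "z$1 = - ((t * \<phi>)\<^sup>2 * z$1)"
    by (simp add: power2_eq_square)
  then have "z$1 * (1 + (t * \<phi>)\<^sup>2) = 0"
    by (simp add: algebra_simps)
  moreover have "1 + (t * \<phi>)\<^sup>2 > 0"
    by (simp add: add_pos_nonneg)
  ultimately have "z$1 = 0"
    by simp
  moreover from this have "z$2 = 0"
    using z(2) by simp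
  moreover from calculation have "z$3 = 0"
    using z(3) by simp
  ultimately have "z = 0"
    unfolding vec_eq_iff forall_3 by simp
  then show "x = y"
    by (simp add: z_def)
qed

lemma inf_iso_congruence_perturbation:
  assumes "inf_iso_congruence W"
  obtains f d where "linear f" "inj f" "\<And>x. x + t *\<^sub>R W x = f x + d"
proof -
  obtain \<phi> c1 c2 b where W: "\<And>x. W x = iso_matrix \<phi> c1 c2 *v x + b"
    using assms unfolding inf_iso_congruence_def by blast
  have "linear (\<lambda>x. x + t *\<^sub>R (iso_matrix \<phi> c1 c2 *v x))"
    by (rule linearI) (simp_all add: algebra_simps)
  moreover have "x + t *\<^sub>R W x = (x + t *\<^sub>R (iso_matrix \<phi> c1 c2 *v x)) + t *\<^sub>R b" for x
    by (simp add: W algebra_simps)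
  ultimately show ?thesis
    using that inj_id_plus_iso_matrix by blast
qed

lemma is_net_perturbation:
  assumes net: "is_net m n F"
    and congruences: "\<forall>k<m. \<forall>l<n. \<exists>W. inf_iso_congruence W \<and>
           (\<forall>i\<in>{k, Suc k}. \<forall>j\<in>{l, Suc l}. V i j = W (F i j))"
  shows "is_net m n (\<lambda>i j. F i j + t *\<^sub>R V i j)"
  unfolding is_net_def
proof (intro allI impI)
  fix k l
  assume "k < m" "l < n"
  then obtain W where "inf_iso_congruence W" and V: "\<forall>i\<in>{k, Suc k}. \<forall>j\<in>{l, Suc l}. V i j = W (F i j)"
    using congruences by blast
  then obtain f d where "linear f" "inj f" and fd: "\<And>x. x + t *\<^sub>R W x = f x + d"
    using inf_iso_congruence_perturbation by blast
  have "convex_quad (F k l) (F (Suc k) l) (F (Suc k) (Suc l)) (F k (Suc l))"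
    using net \<open>k < m\<close> \<open>l < n\<close> unfolding is_net_def by blast
  then show "convex_quad (F k l + t *\<^sub>R V k l) (F (Suc k) l + t *\<^sub>R V (Suc k) l)
      (F (Suc k) (Suc l) + t *\<^sub>R V (Suc k) (Suc l)) (F k (Suc l) + t *\<^sub>R V k (Suc l))"
    using convex_quad_injective_affine_image[OF \<open>linear f\<close> \<open>inj f\<close>] V by (simp add: fd)
qed

lemma face_plane_properties:
  assumes "is_net m n F" "i < m" "j < n"
  shows "affine (face_plane F i j)" "aff_dim (face_plane F i j) \<le> 2"
    and "{F i j, F (Suc i) j, F (Suc i) (Suc j), F i (Suc j)} \<subseteq> face_plane F i j"
  using assms aff_dim_convex_quad unfolding face_plane_def is_net_def by (auto intro: hull_inc)

lemma eventually_admissible_vertex: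
  fixes G :: "real \<Rightarrow> nat \<Rightarrow> nat \<Rightarrow> real^3"
  assumes nets: "\<And>t. is_net m n (G t)" and cont: "\<And>i j. isCont (\<lambda>t. G t i j) s"
    and "Suc i < m" "Suc j < n"
    and "admissible_angle_planes (G s (Suc i) (Suc j))
      (face_plane (G s) i j) (face_plane (G s) (Suc i) j)
      (face_plane (G s) (Suc i) (Suc j)) (face_plane (G s) i (Suc j))"
  shows "\<forall>\<^sub>F t in nhds s. admissible_angle_planes (G t (Suc i) (Suc j))
      (face_plane (G t) i j) (face_plane (G t) (Suc i) j)
      (face_plane (G t) (Suc i) (Suc j)) (face_plane (G t) i (Suc j))"
proof (rule eventually_admissible_angle_planes[where A = "\<lambda>t. G t i (Suc j)"
      and B = "\<lambda>t. G t (Suc i) j" and C = "\<lambda>t. G t (Suc (Suc i)) (Suc j)"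
      and D = "\<lambda>t. G t (Suc i) (Suc (Suc j))"])
  have "convex_quad (G s i j) (G s (Suc i) j) (G s (Suc i) (Suc j)) (G s i (Suc j))"
    "convex_quad (G s (Suc i) (Suc j)) (G s (Suc (Suc i)) (Suc j))
      (G s (Suc (Suc i)) (Suc (Suc j))) (G s (Suc i) (Suc (Suc j)))"
    using nets[of s] \<open>Suc i < m\<close> \<open>Suc j < n\<close> unfolding is_net_def by auto
  then show "G s i (Suc j) \<noteq> G s (Suc i) (Suc j)" "G s (Suc i) j \<noteq> G s (Suc i) (Suc j)"
    "G s (Suc (Suc i)) (Suc j) \<noteq> G s (Suc i) (Suc j)" "G s (Suc i) (Suc (Suc j)) \<noteq> G s (Suc i) (Suc j)"
    by (metis convex_quad_distinct)+
qed (use assms face_plane_properties[OF nets] in auto)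

lemma eventually_dual_convex:
  fixes G :: "real \<Rightarrow> nat \<Rightarrow> nat \<Rightarrow> real^3"
  assumes "dual_convex m n (G s)" and nets: "\<And>t. is_net m n (G t)"
    and cont: "\<And>i j. isCont (\<lambda>t. G t i j) s"
  shows "\<forall>\<^sub>F t in nhds s. dual_convex m n (G t)"
proof -
  let ?adm = "\<lambda>t i j. admissible_angle_planes (G t (Suc i) (Suc j))
      (face_plane (G t) i j) (face_plane (G t) (Suc i) j)
      (face_plane (G t) (Suc i) (Suc j)) (face_plane (G t) i (Suc j))"
  have "\<forall>p\<in>{..<m} \<times> {..<n}. \<forall>\<^sub>F t in nhds s. Suc (fst p) < m \<longrightarrow> Suc (snd p) < n \<longrightarrow> ?adm t (fst p) (snd p)"
  proof
    fix p :: "nat \<times> nat"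
    obtain i j where "p = (i, j)"
      by fastforce
    show "\<forall>\<^sub>F t in nhds s. Suc (fst p) < m \<longrightarrow> Suc (snd p) < n \<longrightarrow> ?adm t (fst p) (snd p)"
    proof (cases "Suc i < m \<and> Suc j < n")
      case True
      then have "?adm s i j"
        using assms(1) unfolding dual_convex_def by (metis diff_Suc_1 zero_less_Suc)
      then show ?thesis
        using eventually_admissible_vertex[OF nets cont] True \<open>p = (i, j)\<close> by simp
    qed (simp add: \<open>p = (i, j)\<close>)
  qed
  then have "\<forall>\<^sub>F t in nhds s. \<forall>p\<in>{..<m} \<times> {..<n}. Suc (fst p) < m \<longrightarrow> Suc (snd p) < n \<longrightarrow> ?adm t (fst p) (snd p)"
    by (rule eventually_ball_finite[rotated]) simp
  then show ?thesis
  proof eventually_elim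
    case (elim t)
    have "admissible_angle_planes (G t i j)
        (face_plane (G t) (i - 1) (j - 1)) (face_plane (G t) i (j - 1))
        (face_plane (G t) i j) (face_plane (G t) (i - 1) j)"
      if "0 < i" "i < m" "0 < j" "j < n" for i j
      using elim[rule_format, of "(i - 1, j - 1)"] that by (simp add: less_imp_diff_less)
    moreover have "is_net m n (G t)" "2 \<le> m" "2 \<le> n"
      using nets assms(1) unfolding dual_convex_def by auto
    ultimately show ?case
      unfolding dual_convex_def by blast
  qed
qed

theorem lemma2:
  fixes m n :: nat and F V :: "nat \<Rightarrow> nat \<Rightarrow> real^3"
  assumes "dual_convex m n F"
    and "\<forall>k<m. \<forall>l<n. \<exists>W. inf_iso_congruence W \<and>
           (\<forall>i\<in>{k, Suc k}. \<forall>j\<in>{l, Suc l}. V i j = W (F i j))"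
  shows "\<exists>\<epsilon>>0. \<forall>t. \<bar>t\<bar> < \<epsilon> \<longrightarrow> dual_convex m n (\<lambda>i j. F i j + t *\<^sub>R V i j)"
proof -
  define G where "G t i j = F i j + t *\<^sub>R V i j" for t i j
  have "is_net m n F"
    using assms(1) by (simp add: dual_convex_def)
  then have "is_net m n (G t)" for t
    unfolding G_def using assms(2) by (rule is_net_perturbation)
  moreover have "isCont (\<lambda>t. G t i j) 0" for i j
    unfolding G_def by (intro continuous_intros)
  moreover have "G 0 = F"
    by (intro ext) (simp add: G_def)
  then have "dual_convex m n (G 0)"
    using assms(1) by simp
  ultimately have "\<forall>\<^sub>F t in nhds 0. dual_convex m n (G t)"
    by (intro eventually_dual_convex)
  then show ?thesis
    unfolding eventually_nhds_metric G_def dist_real_def by simp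
qed

end
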